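(* For every integer $n\ge 1$, $$m^*(n,4)\le m^*\big(n,4,2\lceil\log_2(n+1)\rceil\big)\le 4\lceil\log_2(n+1)\rceil.$$
   Context: For a binary matrix $M$ and a nonempty set $S$ of its columns, $S$ is a stopping set if the submatrix formed by $S$ has no row with exactly one $1$; $s(M)$ is the minimum size of a stopping set ($+\infty$ if none). $M$ is $d$-decodable if $s(M)\ge d+1$, and $(d,k)$-decodable if moreover every column has exactly $k$ ones. $m^*(n,d)$ (resp. $m^*(n,d,k)$) is the minimum $m$ such that an $m\times n$ $d$-decodable (resp. $(d,k)$-decodable) matrix exists. *)

theory Defs
  imports Complex_Main "HOL-Library.Extended_Nat"
begin

text \<open>An m x n binary matrix is a function M :: nat => nat => bool; M i j is the
(i,j) entry for i < m (rows) and j < n (columns). Entries outside the range are ignored.\<close>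

definition stopping_set :: "nat \<Rightarrow> nat \<Rightarrow> (nat \<Rightarrow> nat \<Rightarrow> bool) \<Rightarrow> nat set \<Rightarrow> bool" where
  "stopping_set m n M S \<longleftrightarrow> S \<noteq> {} \<and> S \<subseteq> {..<n} \<and>
     (\<forall>i<m. card {j \<in> S. M i j} \<noteq> 1)"

text \<open>s(M): minimum size of a stopping set, infinity if none.\<close>
definition stop_dist :: "nat \<Rightarrow> nat \<Rightarrow> (nat \<Rightarrow> nat \<Rightarrow> bool) \<Rightarrow> enat" where
  "stop_dist m n M = (INF S \<in> {S. stopping_set m n M S}. enat (card S))"

definition decodable :: "nat \<Rightarrow> nat \<Rightarrow> nat \<Rightarrow> (nat \<Rightarrow> nat \<Rightarrow> bool) \<Rightarrow> bool" where
  "decodable m n d M \<longleftrightarrow> stop_dist m n M \<ge> enat (d + 1)"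

definition decodable_k :: "nat \<Rightarrow> nat \<Rightarrow> nat \<Rightarrow> nat \<Rightarrow> (nat \<Rightarrow> nat \<Rightarrow> bool) \<Rightarrow> bool" where
  "decodable_k m n d k M \<longleftrightarrow> decodable m n d M \<and> (\<forall>j<n. card {i. i < m \<and> M i j} = k)"

text \<open>m*(n,d) and m*(n,d,k); infinity if no such matrix exists.\<close>
definition mstar :: "nat \<Rightarrow> nat \<Rightarrow> enat" where
  "mstar n d = (INF m \<in> {m. \<exists>M. decodable m n d M}. enat m)"

definition mstar_k :: "nat \<Rightarrow> nat \<Rightarrow> nat \<Rightarrow> enat" where
  "mstar_k n d k = (INF m \<in> {m. \<exists>M. decodable_k m n d k M}. enat m)"

end

theory Submission
  imports Defs "HOL-Algebra.Algebraic_Closure_Type" "HOL-Library.Z2"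
begin

(* Let F be the field with 2^t elements (the fixed points of x \<mapsto> x^(2^t) in the algebraic
   closure of GF(2)) and identify F with GF(2)^t via a basis. The vectors
   (x, x^3) for x in F form a subset of GF(2)^(2t) in which no four distinct members sum to
   zero: x + y + z + w = 0 and x^3 + y^3 + z^3 + w^3 = 0 force (x + y)(y + z)(z + x) = 0 in
   characteristic 2. Write these vectors as the columns of a 2t x 2^t matrix and follow every
   row by its complement; every column then has weight 2t. A stopping set S meets each
   complementary pair of rows in a number of columns different from 1 on both rows, so for
   |S| <= 3 all its columns coincide and for |S| = 4 every coordinate has even weight on S,
   i.e. its columns sum to zero. Hence every stopping set has at least 5 elements, and
   t = ceil(log2(n + 1)) gives 2^t >= n columns. *)

section \<open>Subset sums in groups of exponent two\<close>

lemma sum_sym_diff: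
  fixes b :: "'i \<Rightarrow> 'a::ab_group_add"
  assumes self_inverse: "\<And>x::'a. x + x = 0" and "finite A" "finite B"
  shows "sum b A + sum b B = sum b (sym_diff A B)"
proof -
  have "sum b A + sum b B = (sum b (A - B) + sum b (B - A)) + (sum b (A \<inter> B) + sum b (A \<inter> B))"
    using assms(2,3) sum.Int_Diff[of A b B] sum.Int_Diff[of B b A] by (simp add: Int_commute ac_simps)
  also have "\<dots> = sum b (sym_diff A B)"
    using assms(2,3) by (simp add: self_inverse sum.union_disjoint Diff_Int_distrib2 Int_Diff)
  finally show ?thesis .
qed

lemma sum_of_subset_sums:
  fixes b :: "'i \<Rightarrow> 'a::ab_group_add"
  assumes self_inverse: "\<And>x::'a. x + x = 0"
    and "finite S" and "\<And>j. j \<in> S \<Longrightarrow> finite (A j)"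
  shows "(\<Sum>j\<in>S. sum b (A j)) = sum b {i. odd (card {j\<in>S. i \<in> A j})}"
  using assms(2,3)
proof (induction S rule: finite_induct)
  case (insert a S)
  let ?odd = "\<lambda>S. {i. odd (card {j\<in>S. i \<in> A j})}"
  have "card {j\<in>insert a S. i \<in> A j} = card {j\<in>S. i \<in> A j} + (if i \<in> A a then 1 else 0)" for i
  proof -
    have "{j\<in>insert a S. i \<in> A j} = (if i \<in> A a then insert a {j\<in>S. i \<in> A j} else {j\<in>S. i \<in> A j})"
      by auto
    then show ?thesis using insert.hyps by simp
  qed
  then have odd_insert: "?odd (insert a S) = sym_diff (A a) (?odd S)"
    by auto
  have "?odd S \<subseteq> (\<Union>j\<in>S. A j)"
  proof
    fix i assume "i \<in> ?odd S"
    then have "{j\<in>S. i \<in> A j} \<noteq> {}"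
      by (metis (mono_tags) card.empty even_zero mem_Collect_eq)
    then show "i \<in> (\<Union>j\<in>S. A j)"
      by blast
  qed
  then have "finite (?odd S)"
    using insert by (meson finite_UN_I finite_subset insertCI)
  then have "sum b (A a) + sum b (?odd S) = sum b (?odd (insert a S))"
    unfolding odd_insert using insert.prems by (intro sum_sym_diff[OF self_inverse]) auto
  then show ?case
    using insert by simp
qed simp

lemma sum_fun_upd_Pow_lessThan_Suc:
  fixes b :: "nat \<Rightarrow> 'a::comm_monoid_add"
  assumes "B \<subseteq> {..<k}"
  shows "sum (b(k := y)) B = sum b B" and "sum (b(k := y)) (insert k B) = y + sum b B"
proof -
  have "k \<notin> B" and "finite B"
    using assms finite_subset by auto
  then show "sum (b(k := y)) B = sum b B"
    by (intro sum.cong) auto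
  with \<open>k \<notin> B\<close> \<open>finite B\<close> show "sum (b(k := y)) (insert k B) = y + sum b B"
    by simp
qed

lemma Pow_lessThan_Suc: "Pow {..<Suc k} = Pow {..<k} \<union> insert k ` Pow {..<k}"
  by (simp add: lessThan_Suc Pow_insert)

lemma image_sum_fun_upd_Pow_lessThan_Suc:
  fixes b :: "nat \<Rightarrow> 'a::comm_monoid_add"
  shows "sum (b(k := y)) ` Pow {..<Suc k} = sum b ` Pow {..<k} \<union> (+) y ` sum b ` Pow {..<k}"
proof -
  have "sum (b(k := y)) ` Pow {..<k} = sum b ` Pow {..<k}"
    by (rule image_cong) (simp_all del: fun_upd_apply add: sum_fun_upd_Pow_lessThan_Suc)
  moreover have "sum (b(k := y)) ` insert k ` Pow {..<k} = (+) y ` sum b ` Pow {..<k}"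
    unfolding image_image
    by (rule image_cong) (simp_all del: fun_upd_apply add: sum_fun_upd_Pow_lessThan_Suc)
  ultimately show ?thesis
    unfolding Pow_lessThan_Suc image_Un by simp
qed

lemma inj_on_sum_fun_upd_Pow_lessThan_Suc:
  fixes b :: "nat \<Rightarrow> 'a::ab_group_add"
  assumes self_inverse: "\<And>x::'a. x + x = 0"
    and inj: "inj_on (sum b) (Pow {..<k})" and new: "y \<notin> sum b ` Pow {..<k}"
  shows "inj_on (sum (b(k := y))) (Pow {..<Suc k})"
  unfolding Pow_lessThan_Suc inj_on_Un
proof (intro conjI)
  show "inj_on (sum (b(k := y))) (Pow {..<k})"
    using inj by (subst inj_on_cong[where g = "sum b"]) (auto simp del: fun_upd_apply simp: sum_fun_upd_Pow_lessThan_Suc)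
  show "inj_on (sum (b(k := y))) (insert k ` Pow {..<k})"
    using inj by (auto simp del: fun_upd_apply simp: inj_on_def sum_fun_upd_Pow_lessThan_Suc)
  have shifted_ne: "sum b A \<noteq> y + sum b B" if "A \<subseteq> {..<k}" "B \<subseteq> {..<k}" for A B
  proof
    assume "sum b A = y + sum b B"
    then have "y = sum b A + sum b B"
      by (metis add.assoc add.commute add_0 self_inverse)
    also have "\<dots> = sum b (sym_diff A B)"
      using that by (meson finite_lessThan finite_subset sum_sym_diff[OF self_inverse])
    finally show False
      using new that by blast
  qed
  then show "sum (b(k := y)) ` (Pow {..<k} - insert k ` Pow {..<k}) \<inter>
        sum (b(k := y)) ` (insert k ` Pow {..<k} - Pow {..<k}) = {}"
  proof (intro equals0I)
    fix z assume "z \<in> sum (b(k := y)) ` (Pow {..<k} - insert k ` Pow {..<k}) \<inter>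
        sum (b(k := y)) ` (insert k ` Pow {..<k} - Pow {..<k})"
    then obtain A B where "A \<subseteq> {..<k}" "B \<subseteq> {..<k}"
      and "sum (b(k := y)) A = sum (b(k := y)) (insert k B)"
      by blast
    then show False
      using shifted_ne by (metis sum_fun_upd_Pow_lessThan_Suc)
  qed
qed

theorem ex_bij_betw_sum_Pow_lessThan:
  fixes F :: "'a::ab_group_add set"
  assumes self_inverse: "\<And>x::'a. x + x = 0"
    and "finite F" and "0 \<in> F" and add_closed: "\<And>x y. x \<in> F \<Longrightarrow> y \<in> F \<Longrightarrow> x + y \<in> F"
  shows "\<exists>k (b :: nat \<Rightarrow> 'a). bij_betw (sum b) (Pow {..<k}) F"
proof -
  define P where "P k \<longleftrightarrow> (\<exists>b :: nat \<Rightarrow> 'a. inj_on (sum b) (Pow {..<k}) \<and> sum b ` Pow {..<k} \<subseteq> F)" for k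
  have "P 0"
    using \<open>0 \<in> F\<close> by (auto simp: P_def)
  have P_bound: "k < card F" if Pk: "P k" for k
  proof -
    obtain b :: "nat \<Rightarrow> 'a" where "inj_on (sum b) (Pow {..<k})" "sum b ` Pow {..<k} \<subseteq> F"
      using Pk unfolding P_def by blast
    have "k < 2 ^ k"
      by (rule less_exp)
    also have "\<dots> = card (sum b ` Pow {..<k})"
      using \<open>inj_on (sum b) (Pow {..<k})\<close> by (simp add: card_image card_Pow)
    also have "\<dots> \<le> card F"
      by (rule card_mono[OF \<open>finite F\<close> \<open>sum b ` Pow {..<k} \<subseteq> F\<close>])
    finally show ?thesis .
  qed
  then have bounded: "y \<le> card F" if "P y" for y
    using that less_imp_le by blast
  define k where "k = Greatest P"
  have "P k"
    unfolding k_def using \<open>P 0\<close> bounded by (rule GreatestI_nat)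
  from \<open>P k\<close> obtain b where inj: "inj_on (sum b) (Pow {..<k})" and sub: "sum b ` Pow {..<k} \<subseteq> F"
    unfolding P_def by blast
  have "sum b ` Pow {..<k} = F"
  proof (rule ccontr)
    assume "sum b ` Pow {..<k} \<noteq> F"
    then obtain y where "y \<in> F" and new: "y \<notin> sum b ` Pow {..<k}"
      using sub by blast
    have "inj_on (sum (b(k := y))) (Pow {..<Suc k})"
      by (rule inj_on_sum_fun_upd_Pow_lessThan_Suc[OF self_inverse inj new])
    moreover have "sum (b(k := y)) ` Pow {..<Suc k} \<subseteq> F"
      unfolding image_sum_fun_upd_Pow_lessThan_Suc using sub add_closed \<open>y \<in> F\<close> by auto
    ultimately have "P (Suc k)"
      unfolding P_def by blast
    then have "Suc k \<le> k"
      unfolding k_def using bounded by (rule Greatest_le_nat)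
    then show False
      by simp
  qed
  then show ?thesis
    using inj by (auto simp: bij_betw_def)
qed

section \<open>Finite fields\<close>

lemma poly_pderiv_eq_0_if_order_ge_2:
  fixes p :: "'a::idom poly"
  assumes "p \<noteq> 0" and "order x p \<ge> 2"
  shows "poly (pderiv p) x = 0"
proof -
  define a where "a = [:-x, 1:]"
  have "a ^ 2 dvd p"
    unfolding a_def using order_1[of x p] power_le_dvd[OF _ assms(2)] by blast
  then obtain q where "p = a ^ 2 * q"
    by (rule dvdE)
  then have "p = a * (a * q)"
    by (simp add: power2_eq_square mult.assoc)
  moreover have "poly a x = 0"
    by (simp add: a_def)
  ultimately show ?thesis
    by (simp add: pderiv_mult)
qed

lemma proots_prod_mset_linear_factors: "proots (\<Prod>x\<in>#A. [:-x, 1:]) = A"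
proof (induction A)
  case (add x A)
  have "proots ([:-x, 1:] * (\<Prod>y\<in>#A. [:-y, 1:])) = add_mset x A"
    using add by (subst proots_mult) auto
  then show ?case
    by (simp only: image_mset_add_mset prod_mset.add_mset)
qed simp

lemma card_roots_eq_degree_if_separable:
  fixes p :: "'a::alg_closed_field poly"
  assumes "p \<noteq> 0" and separable: "\<And>x. poly p x = 0 \<Longrightarrow> poly (pderiv p) x \<noteq> 0"
  shows "card {x. poly p x = 0} = degree p"
proof -
  obtain A where "size A = degree p" and p: "p = smult (lead_coeff p) (\<Prod>x\<in>#A. [:-x, 1:])"
    using alg_closed_imp_factorization[OF \<open>p \<noteq> 0\<close>] by blast
  moreover have "proots p = A"
    using \<open>p \<noteq> 0\<close> by (subst p) (simp add: proots_prod_mset_linear_factors)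
  ultimately have "size (proots p) = degree p"
    by simp
  have simple: "count (proots p) x = 1" if "x \<in># proots p" for x
  proof -
    have "poly p x = 0"
      using that \<open>p \<noteq> 0\<close> by simp
    then have "order x p > 0" and "\<not> order x p \<ge> 2"
      using \<open>p \<noteq> 0\<close> separable poly_pderiv_eq_0_if_order_ge_2 by (auto simp: order_gt_0_iff)
    then show ?thesis
      using \<open>p \<noteq> 0\<close> by simp
  qed
  have "size (proots p) = card (set_mset (proots p))"
    by (simp add: size_multiset_overloaded_eq simple)
  then show ?thesis
    using \<open>size (proots p) = degree p\<close> \<open>p \<noteq> 0\<close> by simp
qed

definition frobenius_fixed :: "nat \<Rightarrow> 'a::comm_semiring_1 set" where
  "frobenius_fixed t = {x. x ^ CHAR('a) ^ t = x}"

lemma card_frobenius_fixed: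
  assumes "CHAR('a::alg_closed_field) > 0" and "t > 0"
  shows "card (frobenius_fixed t :: 'a set) = CHAR('a) ^ t"
proof -
  define q where "q = CHAR('a) ^ t"
  have "CHAR('a) \<ge> 2"
    using prime_CHAR_semidom[OF assms(1)] by (rule prime_ge_2_nat)
  moreover have "CHAR('a) \<le> q"
    unfolding q_def using \<open>t > 0\<close> \<open>CHAR('a) \<ge> 2\<close> by (intro self_le_power) simp_all
  ultimately have "q \<ge> 2"
    by simp
  define p :: "'a poly" where "p = monom 1 q + [:0, -1:]"
  have poly_p: "poly p x = x ^ q - x" for x
    by (simp add: p_def poly_monom)
  have "degree p = q"
    unfolding p_def using \<open>q \<ge> 2\<close> by (subst degree_add_eq_left) (simp_all add: degree_monom_eq)
  then have "p \<noteq> 0"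
    using \<open>q \<ge> 2\<close> by auto
  have "of_nat q = (0 :: 'a)"
    unfolding q_def using \<open>t > 0\<close> by (simp add: of_nat_eq_0_iff_char_dvd)
  then have "pderiv p = [:-1:]"
    by (simp add: p_def pderiv_add pderiv_monom pderiv_pCons)
  then have "card {x. poly p x = 0} = q"
    using card_roots_eq_degree_if_separable[OF \<open>p \<noteq> 0\<close>] \<open>degree p = q\<close> by simp
  then show ?thesis
    by (simp add: frobenius_fixed_def poly_p q_def)
qed

lemma frobenius_fixed_add:
  assumes "prime CHAR('a::comm_semiring_1)" and "x \<in> frobenius_fixed t" and "y \<in> frobenius_fixed t"
  shows "x + y \<in> (frobenius_fixed t :: 'a set)"
  using assms freshmans_dream'[OF assms(1) refl, of x y] by (simp add: frobenius_fixed_def)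

lemma frobenius_fixed_power:
  assumes "x \<in> frobenius_fixed t"
  shows "x ^ m \<in> frobenius_fixed t"
proof -
  have "(x ^ m) ^ CHAR('a) ^ t = (x ^ CHAR('a) ^ t) ^ m"
    by (simp only: mult.commute flip: power_mult)
  then show ?thesis
    using assms by (simp add: frobenius_fixed_def)
qed

lemma CHAR_bit: "CHAR(bit) = 2"
proof (rule CHAR_eqI)
  show "of_nat x = (0 :: bit) \<Longrightarrow> 2 dvd x" for x
    by (induction x) auto
qed simp

lemma sum_cubes_eq_0_char_2:
  fixes x y z w :: "'a::idom"
  assumes "CHAR('a) = 2" and "x + y + z + w = 0" and "x ^ 3 + y ^ 3 + z ^ 3 + w ^ 3 = 0"
  shows "x = y \<or> y = z \<or> z = x"
proof -
  have two: "(2::'a) = 0"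
    using of_nat_CHAR[where 'a = 'a] assms(1) by simp
  have "(3::'a) = 2 + 1"
    by simp
  also have "\<dots> = 1"
    using two by simp
  finally have three: "(3::'a) = 1" .
  have w: "w = x + y + z"
    using assms(2) uminus_CHAR_2[OF assms(1)] by (metis add.commute add_eq_0_iff)
  have "x ^ 3 + y ^ 3 + z ^ 3 + (x + y + z) ^ 3 = 2 * (x^3 + y^3 + z^3) + 3 * ((x + y) * (y + z) * (z + x))"
    by (simp add: power3_eq_cube algebra_simps numeral_eq_Suc)
  also have "\<dots> = (x + y) * (y + z) * (z + x)"
    using two by (simp add: three)
  finally have "(x + y) * (y + z) * (z + x) = 0"
    using assms(3) w by simp
  then show ?thesis
    using uminus_CHAR_2[OF assms(1)] by (auto simp: add_eq_0_iff)
qed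

lemma sum_cubes_ne_0_if_card_4:
  fixes e :: "'i \<Rightarrow> 'a::idom"
  assumes "CHAR('a) = 2" and "card S = 4" and "inj_on e S" and "sum e S = 0"
  shows "(\<Sum>j\<in>S. e j ^ 3) \<noteq> 0"
proof
  assume cubes: "(\<Sum>j\<in>S. e j ^ 3) = 0"
  obtain a b c d where S: "S = {a, b, c, d}" and "distinct [a, b, c, d]"
    using \<open>card S = 4\<close> by (auto simp: card_Suc_eq numeral_eq_Suc)
  then have "e a + e b + e c + e d = 0" and "e a ^ 3 + e b ^ 3 + e c ^ 3 + e d ^ 3 = 0"
    using \<open>sum e S = 0\<close> cubes by (simp_all add: ac_simps)
  then have "e a = e b \<or> e b = e c \<or> e c = e a"
    by (rule sum_cubes_eq_0_char_2[OF \<open>CHAR('a) = 2\<close>])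
  then show False
    using \<open>inj_on e S\<close> \<open>distinct [a, b, c, d]\<close> unfolding S by (auto dest: inj_onD)
qed

section \<open>Incidence matrices with complemented rows\<close>

definition doubled_incidence :: "(nat \<Rightarrow> nat set) \<Rightarrow> nat \<Rightarrow> nat \<Rightarrow> bool" where
  "doubled_incidence V i j \<longleftrightarrow> (i div 2 \<in> V j \<longleftrightarrow> even i)"

lemma doubled_incidence_even [simp]: "doubled_incidence V (2 * i) j \<longleftrightarrow> i \<in> V j"
  and doubled_incidence_odd [simp]: "doubled_incidence V (Suc (2 * i)) j \<longleftrightarrow> i \<notin> V j"
  by (simp_all add: doubled_incidence_def)

lemma card_column_doubled_incidence: "card {i. i < 2 * r \<and> doubled_incidence V i j} = r"
proof -
  define row where "row c = (if c \<in> V j then 2 * c else Suc (2 * c))" for c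
  have "{i. i < 2 * r \<and> doubled_incidence V i j} = row ` {..<r}"
  proof (intro equalityI subsetI)
    fix i assume "i \<in> {i. i < 2 * r \<and> doubled_incidence V i j}"
    then show "i \<in> row ` {..<r}"
      by (intro image_eqI[of _ _ "i div 2"]) (auto simp: row_def doubled_incidence_def elim!: evenE oddE)
  qed (auto simp: row_def)
  moreover have "inj_on row {..<r}"
    by (rule inj_onI) (auto simp: row_def split: if_splits)
  ultimately show ?thesis
    by (simp add: card_image)
qed

lemma card_filter_add_card_filter_not:
  "finite S \<Longrightarrow> card {j\<in>S. P j} + card {j\<in>S. \<not> P j} = card S"
  by (subst card_Un_disjoint[symmetric]) (auto intro: arg_cong[where f = card])

lemma all_or_none_if_card_filter_ne_1:
  assumes "finite S" "card S \<le> 3" "card {j\<in>S. P j} \<noteq> 1" "card {j\<in>S. \<not> P j} \<noteq> 1"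
  shows "(\<forall>j\<in>S. P j) \<or> (\<forall>j\<in>S. \<not> P j)"
proof -
  have "card {j\<in>S. P j} = 0 \<or> card {j\<in>S. \<not> P j} = 0"
    using assms card_filter_add_card_filter_not[OF \<open>finite S\<close>, of P] by linarith
  then show ?thesis
    using \<open>finite S\<close> by auto
qed

lemma even_card_filter_if_card_filter_ne_1:
  assumes "finite S" "card S = 4" "card {j\<in>S. P j} \<noteq> 1" "card {j\<in>S. \<not> P j} \<noteq> 1"
  shows "even (card {j\<in>S. P j})"
  using assms card_filter_add_card_filter_not[OF \<open>finite S\<close>, of P] by presburger

lemma stopping_set_doubled_incidenceD:
  assumes "stopping_set (2 * r) n (doubled_incidence V) S" and "i < r"
  shows "card {j\<in>S. i \<in> V j} \<noteq> 1" and "card {j\<in>S. i \<notin> V j} \<noteq> 1"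
proof -
  have "2 * i < 2 * r" and "Suc (2 * i) < 2 * r"
    using \<open>i < r\<close> by linarith+
  moreover have "\<forall>i'<2 * r. card {j\<in>S. doubled_incidence V i' j} \<noteq> 1"
    using assms(1) by (simp add: stopping_set_def)
  ultimately have "card {j\<in>S. doubled_incidence V (2 * i) j} \<noteq> 1"
    and "card {j\<in>S. doubled_incidence V (Suc (2 * i)) j} \<noteq> 1"
    by blast+
  then show "card {j\<in>S. i \<in> V j} \<noteq> 1" and "card {j\<in>S. i \<notin> V j} \<noteq> 1"
    by simp_all
qed

lemma card_stopping_set_doubled_incidence_ge_4:
  assumes "r > 0" and inj: "inj_on V {..<n}" and range: "\<And>j. j < n \<Longrightarrow> V j \<subseteq> {..<r}"
    and stop: "stopping_set (2 * r) n (doubled_incidence V) S"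
  shows "card S \<ge> 4"
proof (rule ccontr)
  assume "\<not> card S \<ge> 4"
  have "S \<noteq> {}" and "S \<subseteq> {..<n}"
    using stop by (simp_all add: stopping_set_def)
  then have "finite S"
    by (meson finite_lessThan finite_subset)
  have "card S \<le> 3"
    using \<open>\<not> card S \<ge> 4\<close> by simp
  have all_or_none: "(\<forall>j\<in>S. i \<in> V j) \<or> (\<forall>j\<in>S. i \<notin> V j)" if "i < r" for i
    using all_or_none_if_card_filter_ne_1[OF \<open>finite S\<close> \<open>card S \<le> 3\<close>
        stopping_set_doubled_incidenceD[OF stop that]] .
  have "j = j'" if "j \<in> S" "j' \<in> S" for j j'
  proof -
    have "j < n" "j' < n"
      using that \<open>S \<subseteq> {..<n}\<close> by auto
    have "i \<in> V j \<longleftrightarrow> i \<in> V j'" for i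
    proof (cases "i < r")
      case True
      then show ?thesis
        using all_or_none[OF True] that by blast
    next
      case False
      then show ?thesis
        using range[OF \<open>j < n\<close>] range[OF \<open>j' < n\<close>] by auto
    qed
    then have "V j = V j'"
      by blast
    then show ?thesis
      using inj \<open>j < n\<close> \<open>j' < n\<close> by (auto dest: inj_onD)
  qed
  then have "card S \<le> 1"
    using \<open>finite S\<close> by (simp add: card_le_Suc0_iff_eq)
  moreover have "card S \<noteq> 0"
    using \<open>S \<noteq> {}\<close> \<open>finite S\<close> by simp
  ultimately have "card S = 1"
    by linarith
  have "{j\<in>S. 0 \<in> V j} = S \<or> {j\<in>S. 0 \<notin> V j} = S"
    using all_or_none[OF \<open>r > 0\<close>] by blast
  then show False
    using stopping_set_doubled_incidenceD[OF stop \<open>r > 0\<close>] \<open>card S = 1\<close> by auto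
qed

theorem decodable_doubled_incidence:
  assumes "r > 0" and "inj_on V {..<n}" and range: "\<And>j. j < n \<Longrightarrow> V j \<subseteq> {..<r}"
    and odd_coordinate: "\<And>S. S \<subseteq> {..<n} \<Longrightarrow> card S = 4 \<Longrightarrow> \<exists>i. odd (card {j\<in>S. i \<in> V j})"
  shows "decodable (2 * r) n 4 (doubled_incidence V)"
  unfolding decodable_def stop_dist_def
proof (rule INF_greatest, clarify)
  fix S assume stop: "stopping_set (2 * r) n (doubled_incidence V) S"
  then have "S \<subseteq> {..<n}"
    by (simp add: stopping_set_def)
  then have "finite S"
    by (meson finite_lessThan finite_subset)
  have "card S \<noteq> 4"
  proof
    assume "card S = 4"
    then obtain i where odd: "odd (card {j\<in>S. i \<in> V j})"
      using odd_coordinate \<open>S \<subseteq> {..<n}\<close> by blast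
    then have "{j\<in>S. i \<in> V j} \<noteq> {}"
      by (metis card.empty even_zero)
    then have "i < r"
      using range \<open>S \<subseteq> {..<n}\<close> by blast
    then show False
      using odd even_card_filter_if_card_filter_ne_1[OF \<open>finite S\<close> \<open>card S = 4\<close>
          stopping_set_doubled_incidenceD[OF stop \<open>i < r\<close>]] by blast
  qed
  moreover have "card S \<ge> 4"
    using card_stopping_set_doubled_incidence_ge_4[OF assms(1-3) stop] .
  ultimately show "enat (4 + 1) \<le> enat (card S)"
    by simp
qed

corollary decodable_k_doubled_incidence:
  assumes "r > 0" and "inj_on V {..<n}" and "\<And>j. j < n \<Longrightarrow> V j \<subseteq> {..<r}"
    and "\<And>S. S \<subseteq> {..<n} \<Longrightarrow> card S = 4 \<Longrightarrow> \<exists>i. odd (card {j\<in>S. i \<in> V j})"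
  shows "decodable_k (2 * r) n 4 r (doubled_incidence V)"
  unfolding decodable_k_def
  using decodable_doubled_incidence[OF assms] card_column_doubled_incidence by blast

lemma obtain_binary_coordinates:
  fixes F :: "'a::ab_group_add set"
  assumes self_inverse: "\<And>x::'a. x + x = 0"
    and "finite F" and "0 \<in> F" and "\<And>x y. x \<in> F \<Longrightarrow> y \<in> F \<Longrightarrow> x + y \<in> F" and "card F = 2 ^ t"
  obtains coords :: "'a \<Rightarrow> nat set"
  where "inj_on coords F" and "\<And>x. x \<in> F \<Longrightarrow> coords x \<subseteq> {..<t}"
    and "\<And>S g. finite S \<Longrightarrow> (\<And>j. j \<in> S \<Longrightarrow> g j \<in> F) \<Longrightarrow>
           (\<And>i. even (card {j\<in>S. i \<in> coords (g j)})) \<Longrightarrow> (\<Sum>j\<in>S. g j) = 0"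
proof -
  obtain k and b :: "nat \<Rightarrow> 'a" where bij_k: "bij_betw (sum b) (Pow {..<k}) F"
    using ex_bij_betw_sum_Pow_lessThan[OF assms(1-4)] by blast
  have "(2::nat) ^ k = 2 ^ t"
    using bij_betw_same_card[OF bij_k] \<open>card F = 2 ^ t\<close> by (simp add: card_Pow)
  with bij_k have bij: "bij_betw (sum b) (Pow {..<t}) F"
    by simp
  define coords where "coords = the_inv_into (Pow {..<t}) (sum b)"
  have coords_range: "coords x \<subseteq> {..<t}" and sum_coords: "sum b (coords x) = x" if "x \<in> F" for x
    using that bij the_inv_into_into[of "sum b" "Pow {..<t}" x] f_the_inv_into_f[of "sum b" "Pow {..<t}" x]
    by (auto simp: coords_def bij_betw_def)
  show thesis
  proof
    show "inj_on coords F"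
      using sum_coords by (metis inj_onI)
    show "coords x \<subseteq> {..<t}" if "x \<in> F" for x
      using that by (rule coords_range)
    show "(\<Sum>j\<in>S. g j) = 0"
      if "finite S" "\<And>j. j \<in> S \<Longrightarrow> g j \<in> F" "\<And>i. even (card {j\<in>S. i \<in> coords (g j)})" for S g
    proof -
      have "(\<Sum>j\<in>S. g j) = (\<Sum>j\<in>S. sum b (coords (g j)))"
        using that(2) sum_coords by simp
      also have "\<dots> = sum b {i. odd (card {j\<in>S. i \<in> coords (g j)})}"
        using that(1,2) coords_range by (intro sum_of_subset_sums[OF self_inverse]) (auto intro: finite_subset)
      also have "\<dots> = 0"
        using that(3) by simp
      finally show ?thesis .
    qed
  qed
qed

lemma odd_coordinate_cube_columns:
  fixes coords :: "'a::idom \<Rightarrow> nat set" and e :: "'i \<Rightarrow> 'a"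
  assumes "finite S" and "inj_on e S" and e_F: "e ` S \<subseteq> F" and "CHAR('a) = 2"
    and coords_range: "\<And>x. x \<in> F \<Longrightarrow> coords x \<subseteq> {..<t}"
    and sum_zero: "\<And>(S :: 'i set) g. finite S \<Longrightarrow> (\<And>j. j \<in> S \<Longrightarrow> g j \<in> F) \<Longrightarrow>
           (\<And>i. even (card {j\<in>S. i \<in> coords (g j)})) \<Longrightarrow> (\<Sum>j\<in>S. g j) = 0"
    and cube_closed: "\<And>x. x \<in> F \<Longrightarrow> x ^ 3 \<in> F" and "card S = 4"
  shows "\<exists>i. odd (card {j\<in>S. i \<in> coords (e j) \<union> (+) t ` coords (e j ^ 3)})"
proof (rule ccontr)
  let ?V = "\<lambda>j. coords (e j) \<union> (+) t ` coords (e j ^ 3)"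
  assume "\<nexists>i. odd (card {j\<in>S. i \<in> ?V j})"
  then have even: "even (card {j\<in>S. i \<in> ?V j})" for i
    by blast
  have in_F: "e j \<in> F" "e j ^ 3 \<in> F" if "j \<in> S" for j
    using that e_F cube_closed by auto
  have low: "i \<in> coords (e j) \<longleftrightarrow> i < t \<and> i \<in> ?V j" and high: "i \<in> coords (e j ^ 3) \<longleftrightarrow> t + i \<in> ?V j"
    if "j \<in> S" for i j
    using coords_range[OF in_F(1)[OF that]] by auto
  have "{j\<in>S. i \<in> coords (e j)} = (if i < t then {j\<in>S. i \<in> ?V j} else {})" for i
    using low by auto
  then have "sum e S = 0"
    using sum_zero[OF \<open>finite S\<close>, of e] even in_F by simp
  have "{j\<in>S. i \<in> coords (e j ^ 3)} = {j\<in>S. t + i \<in> ?V j}" for i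
    using high by auto
  then have "(\<Sum>j\<in>S. e j ^ 3) = 0"
    using sum_zero[OF \<open>finite S\<close>, of "\<lambda>j. e j ^ 3"] even in_F by simp
  then show False
    using sum_cubes_ne_0_if_card_4[OF \<open>CHAR('a) = 2\<close> \<open>card S = 4\<close> \<open>inj_on e S\<close> \<open>sum e S = 0\<close>] by blast
qed

lemma ex_decodable_k_matrix:
  assumes "t > 0" and "n \<le> 2 ^ t"
  shows "\<exists>M. decodable_k (4 * t) n 4 (2 * t) M"
proof -
  define F where "F = (frobenius_fixed t :: bit alg_closure set)"
  have char: "CHAR(bit alg_closure) = 2"
    by (simp add: CHAR_bit)
  have self_inverse: "x + x = 0" for x :: "bit alg_closure"
    using minus_CHAR_2[OF char, of x x] by simp
  have "card F = 2 ^ t"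
    unfolding F_def using card_frobenius_fixed[where 'a = "bit alg_closure", OF _ \<open>t > 0\<close>]
    by (simp add: CHAR_bit)
  then have "finite F"
    by (intro card_ge_0_finite) simp
  have "0 \<in> F"
    by (simp add: F_def frobenius_fixed_def CHAR_bit)
  have add_closed: "x + y \<in> F" if "x \<in> F" "y \<in> F" for x y
    using that frobenius_fixed_add[of x t y] by (simp add: F_def CHAR_bit)
  have cube_closed: "x ^ 3 \<in> F" if "x \<in> F" for x
    using that frobenius_fixed_power by (simp add: F_def)
  obtain coords where "inj_on coords F" and coords_range: "\<And>x. x \<in> F \<Longrightarrow> coords x \<subseteq> {..<t}"
    and sum_zero: "\<And>(S :: nat set) g. finite S \<Longrightarrow> (\<And>j. j \<in> S \<Longrightarrow> g j \<in> F) \<Longrightarrow>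
           (\<And>i. even (card {j\<in>S. i \<in> coords (g j)})) \<Longrightarrow> (\<Sum>j\<in>S. g j) = 0"
    using obtain_binary_coordinates[OF self_inverse \<open>finite F\<close> \<open>0 \<in> F\<close> add_closed \<open>card F = 2 ^ t\<close>]
    by blast
  obtain e where e_F: "e ` {..<n} \<subseteq> F" and inj_e: "inj_on e {..<n}"
    using card_le_inj[of "{..<n}" F] \<open>finite F\<close> \<open>card F = 2 ^ t\<close> \<open>n \<le> 2 ^ t\<close> by auto
  define V where "V j = coords (e j) \<union> (+) t ` coords (e j ^ 3)" for j
  have "decodable_k (2 * (2 * t)) n 4 (2 * t) (doubled_incidence V)"
  proof (rule decodable_k_doubled_incidence)
    show "inj_on V {..<n}"
    proof (rule inj_onI)
      fix j j' assume j: "j \<in> {..<n}" "j' \<in> {..<n}" and "V j = V j'"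
      then have "V j \<inter> {..<t} = V j' \<inter> {..<t}"
        by simp
      moreover have "V j \<inter> {..<t} = coords (e j)" if "j \<in> {..<n}" for j
        using that e_F coords_range cube_closed by (fastforce simp: V_def)
      ultimately have "coords (e j) = coords (e j')"
        using j by simp
      moreover have "e j \<in> F" and "e j' \<in> F"
        using e_F j by auto
      ultimately have "e j = e j'"
        by (rule inj_onD[OF \<open>inj_on coords F\<close>])
      then show "j = j'"
        using j by (rule inj_onD[OF inj_e])
    qed
    show "V j \<subseteq> {..<2 * t}" if "j < n" for j
      using that e_F coords_range cube_closed by (fastforce simp: V_def)
    show "\<exists>i. odd (card {j\<in>S. i \<in> V j})" if "S \<subseteq> {..<n}" and "card S = 4" for S
    proof -
      have "finite S"
        using \<open>S \<subseteq> {..<n}\<close> by (meson finite_lessThan finite_subset)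
      moreover have "inj_on e S"
        using inj_e \<open>S \<subseteq> {..<n}\<close> by (rule inj_on_subset)
      moreover have "e ` S \<subseteq> F"
        using e_F \<open>S \<subseteq> {..<n}\<close> by blast
      ultimately show ?thesis
        unfolding V_def using char coords_range sum_zero cube_closed \<open>card S = 4\<close>
        by (rule odd_coordinate_cube_columns)
    qed
  qed (use \<open>t > 0\<close> in simp)
  then show ?thesis
    by (auto simp: mult.assoc)
qed

theorem corollary4p4:
  fixes n :: nat
  assumes "n \<ge> 1"
  shows "mstar n 4 \<le> mstar_k n 4 (2 * nat \<lceil>log 2 (real n + 1)\<rceil>) \<and>
         mstar_k n 4 (2 * nat \<lceil>log 2 (real n + 1)\<rceil>) \<le> enat (4 * nat \<lceil>log 2 (real n + 1)\<rceil>)"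
proof
  define t where "t = nat \<lceil>log 2 (real n + 1)\<rceil>"
  have "log 2 (real n + 1) > 0"
    using assms by simp
  then have "t > 0" and "log 2 (real n + 1) \<le> real t"
    unfolding t_def by linarith+
  then have "real n + 1 \<le> real (2 ^ t)"
    by (simp add: log_le_iff powr_realpow)
  then have "n \<le> 2 ^ t"
    by linarith
  show "mstar n 4 \<le> mstar_k n 4 (2 * t)"
    unfolding mstar_def mstar_k_def by (rule INF_superset_mono) (auto simp: decodable_k_def)
  obtain M where "decodable_k (4 * t) n 4 (2 * t) M"
    using ex_decodable_k_matrix[OF \<open>t > 0\<close> \<open>n \<le> 2 ^ t\<close>] by blast
  then show "mstar_k n 4 (2 * t) \<le> enat (4 * t)"
    unfolding mstar_k_def by (intro INF_lower2[of "4 * t"]) auto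
qed

end
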